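(* Let $s,d,t\ge1$, let $I=(G,D,\mathsf{cost},\mathsf{supply},\mathsf{demand})$ be an $(s,d)$-decent instance of Min Weight Generalized Domination and $Y\subseteq V(I)$. If every connected component $C$ of $G\setminus Y$ satisfies $|N(C)|\le t$, then the compressed instance $I\{Y\}$ is $(st,\,d+4^{st})$-decent.
   Context: An instance of Min Weight Generalized Domination consists of a loopless multigraph $G$ and for every vertex $u$: a finite domain $D_u$, $\mathsf{cost}_u\colon D_u\to\mathbb{R}_{\ge0}\cup\{+\infty\}$, and $\mathsf{supply}_u,\mathsf{demand}_u\colon D_u\to 2^{\delta(u)}$ ($\delta(u)$ = edges incident to $u$), with some $s_u\in D_u$ having $\mathsf{supply}_u(s_u)=\delta(u)$ and finite cost. Validity of a valuation on edge $e$ with endpoints $u,v$: $e\in\mathsf{demand}_u(\phi(u))\Rightarrow e\in\mathsf{supply}_v(\phi(v))$ and symmetrically; a valuation of $A$ is locally correct on $A$ if this holds for all edges inside $A$; costs are summed. A vertex is $(s,d)$-meager if $|\delta(u)|\le s$ and $|D_u|\le d$; state-monotonous if for all ordered $x_1,x_2\in D_u$ there is $x\in D_u$ with $\mathsf{cost}_u(x)\le\mathsf{cost}_u(x_1)+\mathsf{cost}_u(x_2)$, $\mathsf{supply}_u(x)=\mathsf{supply}_u(x_1)\cup\mathsf{supply}_u(x_2)$, $\mathsf{demand}_u(x)\subseteq\mathsf{demand}_u(x_1)$. An instance is $(s,d)$-decent if all vertices are $(s,d)$-meager and state-monotonous. For $R$ and $S=N(R)$, $E(R,S)$ is the set of edges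 between them and $\mathsf{interaction}_{R,S}(\phi)$ maps each $e\in E(R,S)$ with endpoint $u\in R$ to the subset of $\{\mathsf{Supply},\mathsf{Demand}\}$ containing $\mathsf{Supply}$ iff $e\in\mathsf{supply}_u(\phi(u))$ and $\mathsf{Demand}$ iff $e\in\mathsf{demand}_u(\phi(u))$. The compressed instance $I\{Y\}$: vertices of $Y$ keep domains, costs, supplies, demands and all incident edges (edges inside $Y$ kept). Each connected component $C_i$ of $G\setminus Y$ with nonempty $S_i=N(C_i)$ is collapsed (identified into one vertex, internal edges deleted) to a vertex $u_i$ incident exactly to the edges $E(C_i,S_i)$, with domain $(2^{\{\mathsf{Supply},\mathsf{Demand}\}})^{E(C_i,S_i)}$, $\mathsf{cost}_{u_i}(x)$ the minimum cost of a valuation of $C_i$ locally correct on $C_i$ with interaction $x$ (or $+\infty$), $\mathsf{supply}_{u_i}(x)=\{e\colon\mathsf{Supply}\in x(e)\}$, $\mathsf{demand}_{u_i}(x)=\{e\colon\mathsf{Demand}\in x(e)\}$. All components with empty neighborhood are collapsed together into one isolated vertex $u_\ominus$ with a one-element domain, whose cost is the minimum cost of a locally correct valuation of their union. *)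

theory Defs
  imports "HOL-Library.Extended_Nonnegative_Real"
begin

text \<open>A loopless multigraph is given by a vertex set, an edge set and two endpoint
  maps (edges are unordered; src/tgt just name the two endpoints).\<close>

record ('v, 'e, 's) inst =
  Vs :: "'v set"
  Es :: "'e set"
  src :: "'e \<Rightarrow> 'v"
  tgt :: "'e \<Rightarrow> 'v"
  Dm :: "'v \<Rightarrow> 's set"
  costf :: "'v \<Rightarrow> 's \<Rightarrow> ennreal"
  suppl :: "'v \<Rightarrow> 's \<Rightarrow> 'e set"
  demnd :: "'v \<Rightarrow> 's \<Rightarrow> 'e set"

definition inc :: "('v, 'e, 's) inst \<Rightarrow> 'v \<Rightarrow> 'e set" where
  "inc I u = {e \<in> Es I. src I e = u \<or> tgt I e = u}"

definition adj :: "('v, 'e, 's) inst \<Rightarrow> 'v \<Rightarrow> 'v \<Rightarrow> bool" where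
  "adj I u v \<longleftrightarrow> (\<exists>e \<in> Es I. (src I e = u \<and> tgt I e = v) \<or> (src I e = v \<and> tgt I e = u))"

definition is_instance :: "('v, 'e, 's) inst \<Rightarrow> bool" where
  "is_instance I \<longleftrightarrow>
     finite (Vs I) \<and> finite (Es I) \<and>
     (\<forall>e \<in> Es I. src I e \<in> Vs I \<and> tgt I e \<in> Vs I \<and> src I e \<noteq> tgt I e) \<and>
     (\<forall>u \<in> Vs I. finite (Dm I u) \<and>
        (\<forall>x \<in> Dm I u. suppl I u x \<subseteq> inc I u \<and> demnd I u x \<subseteq> inc I u) \<and>
        (\<exists>x \<in> Dm I u. suppl I u x = inc I u \<and> costf I u x < \<infinity>))"

definition meager :: "nat \<Rightarrow> nat \<Rightarrow> ('v, 'e, 's) inst \<Rightarrow> 'v \<Rightarrow> bool" where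
  "meager s d I u \<longleftrightarrow> card (inc I u) \<le> s \<and> card (Dm I u) \<le> d"

definition state_monotonous :: "('v, 'e, 's) inst \<Rightarrow> 'v \<Rightarrow> bool" where
  "state_monotonous I u \<longleftrightarrow>
     (\<forall>x1 \<in> Dm I u. \<forall>x2 \<in> Dm I u. \<exists>x \<in> Dm I u.
        costf I u x \<le> costf I u x1 + costf I u x2 \<and>
        suppl I u x = suppl I u x1 \<union> suppl I u x2 \<and>
        demnd I u x \<subseteq> demnd I u x1)"

definition decent :: "nat \<Rightarrow> nat \<Rightarrow> ('v, 'e, 's) inst \<Rightarrow> bool" where
  "decent s d I \<longleftrightarrow> is_instance I \<and>
     (\<forall>u \<in> Vs I. meager s d I u \<and> state_monotonous I u)"

definition valuation :: "('v, 'e, 's) inst \<Rightarrow> 'v set \<Rightarrow> ('v \<Rightarrow> 's) \<Rightarrow> bool" where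
  "valuation I A \<phi> \<longleftrightarrow> (\<forall>u \<in> A. \<phi> u \<in> Dm I u)"

definition valid_edge :: "('v, 'e, 's) inst \<Rightarrow> ('v \<Rightarrow> 's) \<Rightarrow> 'e \<Rightarrow> bool" where
  "valid_edge I \<phi> e \<longleftrightarrow>
     (e \<in> demnd I (src I e) (\<phi> (src I e)) \<longrightarrow> e \<in> suppl I (tgt I e) (\<phi> (tgt I e))) \<and>
     (e \<in> demnd I (tgt I e) (\<phi> (tgt I e)) \<longrightarrow> e \<in> suppl I (src I e) (\<phi> (src I e)))"

definition locally_correct :: "('v, 'e, 's) inst \<Rightarrow> 'v set \<Rightarrow> ('v \<Rightarrow> 's) \<Rightarrow> bool" where
  "locally_correct I A \<phi> \<longleftrightarrow>
     (\<forall>e \<in> Es I. src I e \<in> A \<and> tgt I e \<in> A \<longrightarrow> valid_edge I \<phi> e)"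

definition val_cost :: "('v, 'e, 's) inst \<Rightarrow> 'v set \<Rightarrow> ('v \<Rightarrow> 's) \<Rightarrow> ennreal" where
  "val_cost I A \<phi> = (\<Sum>u \<in> A. costf I u (\<phi> u))"

definition comp_of :: "('v, 'e, 's) inst \<Rightarrow> 'v set \<Rightarrow> 'v \<Rightarrow> 'v set" where
  "comp_of I W v = {w \<in> W. (\<lambda>a b. a \<in> W \<and> b \<in> W \<and> adj I a b)\<^sup>*\<^sup>* v w}"

definition components :: "('v, 'e, 's) inst \<Rightarrow> 'v set \<Rightarrow> 'v set set" where
  "components I W = comp_of I W ` W"

definition nbhd :: "('v, 'e, 's) inst \<Rightarrow> 'v set \<Rightarrow> 'v set" where
  "nbhd I R = {v \<in> Vs I - R. \<exists>u \<in> R. adj I u v}"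

definition Ebetween :: "('v, 'e, 's) inst \<Rightarrow> 'v set \<Rightarrow> 'v set \<Rightarrow> 'e set" where
  "Ebetween I R S = {e \<in> Es I. (src I e \<in> R \<and> tgt I e \<in> S) \<or> (src I e \<in> S \<and> tgt I e \<in> R)}"

datatype sd = Supply | Demand

definition interaction :: "('v, 'e, 's) inst \<Rightarrow> 'v set \<Rightarrow> 'v set \<Rightarrow> ('v \<Rightarrow> 's) \<Rightarrow> 'e \<Rightarrow> sd set" where
  "interaction I R S \<phi> e =
     (if e \<in> Ebetween I R S then
        (let u = (if src I e \<in> R then src I e else tgt I e) in
          {z. (z = Supply \<and> e \<in> suppl I u (\<phi> u)) \<or> (z = Demand \<and> e \<in> demnd I u (\<phi> u))})
      else {})"

datatype 'v cvert = Keep 'v | Coll "'v set" | Ominus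
datatype ('s, 'e) cstate = KS 's | IS "'e \<Rightarrow> sd set" | UnitS

definition proj :: "('v, 'e, 's) inst \<Rightarrow> 'v set \<Rightarrow> 'v \<Rightarrow> 'v cvert" where
  "proj I Y v = (if v \<in> Y then Keep v else Coll (comp_of I (Vs I - Y) v))"

definition coll_comps :: "('v, 'e, 's) inst \<Rightarrow> 'v set \<Rightarrow> 'v set set" where
  "coll_comps I Y = {C \<in> components I (Vs I - Y). nbhd I C \<noteq> {}}"

definition null_union :: "('v, 'e, 's) inst \<Rightarrow> 'v set \<Rightarrow> 'v set" where
  "null_union I Y = \<Union> {C \<in> components I (Vs I - Y). nbhd I C = {}}"

definition compress :: "('v, 'e, 's) inst \<Rightarrow> 'v set \<Rightarrow> ('v cvert, 'e, ('s, 'e) cstate) inst" where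
  "compress I Y =
    \<lparr> Vs = Keep ` Y \<union> Coll ` coll_comps I Y \<union>
           (if null_union I Y \<noteq> {} then {Ominus} else {}),
      Es = {e \<in> Es I. src I e \<in> Y \<or> tgt I e \<in> Y},
      src = (\<lambda>e. proj I Y (src I e)),
      tgt = (\<lambda>e. proj I Y (tgt I e)),
      Dm = (\<lambda>w. case w of
               Keep y \<Rightarrow> KS ` Dm I y
             | Coll C \<Rightarrow> IS ` {x. \<forall>e. e \<notin> Ebetween I C (nbhd I C) \<longrightarrow> x e = {}}
             | Ominus \<Rightarrow> {UnitS}),
      costf = (\<lambda>w a. case (w, a) of
               (Keep y, KS b) \<Rightarrow> costf I y b
             | (Coll C, IS x) \<Rightarrow> Inf {val_cost I C \<phi> | \<phi>. valuation I C \<phi> \<and>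
                   locally_correct I C \<phi> \<and> interaction I C (nbhd I C) \<phi> = x}
             | (Ominus, UnitS) \<Rightarrow> Inf {val_cost I (null_union I Y) \<phi> | \<phi>.
                   valuation I (null_union I Y) \<phi> \<and> locally_correct I (null_union I Y) \<phi>}
             | _ \<Rightarrow> \<infinity>),
      suppl = (\<lambda>w a. case (w, a) of
               (Keep y, KS b) \<Rightarrow> suppl I y b
             | (Coll C, IS x) \<Rightarrow> {e. Supply \<in> x e}
             | _ \<Rightarrow> {}),
      demnd = (\<lambda>w a. case (w, a) of
               (Keep y, KS b) \<Rightarrow> demnd I y b
             | (Coll C, IS x) \<Rightarrow> {e. Demand \<in> x e}
             | _ \<Rightarrow> {}) \<rparr>"

end

theory Submission
  imports Defs "HOL-Library.FuncSet"
begin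

text \<open>A collapsed component \<open>C\<close> is incident exactly
  to the edges \<open>E(C, N(C))\<close>; each of its at most \<open>t\<close> neighbours carries at most \<open>s\<close> of
  them, so it has at most \<open>st\<close> edges and at most \<open>4^(st)\<close> interaction states. It is state
  monotonous because two optimal valuations of \<open>C\<close> can be merged vertex by vertex using the
  monotonicity of each vertex of \<open>C\<close>: the merged valuation is still locally correct, costs at most
  the sum, supplies the union and demands less, and so does its interaction.\<close>

section \<open>Connected components\<close>

lemma adj_commute: "adj I a b = adj I b a"
  by (auto simp: adj_def)

lemma mem_comp_of_self: "v \<in> W \<Longrightarrow> v \<in> comp_of I W v"
  by (simp add: comp_of_def)

lemma comp_of_subset: "comp_of I W v \<subseteq> W"
  by (auto simp: comp_of_def)

lemma comp_of_eq:
  assumes "v \<in> comp_of I W v0"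
  shows "comp_of I W v = comp_of I W v0"
proof -
  let ?R = "\<lambda>a b. a \<in> W \<and> b \<in> W \<and> adj I a b"
  have "symp ?R"
    by (auto simp: symp_def adj_commute)
  moreover have "?R\<^sup>*\<^sup>* v0 v"
    using assms by (simp add: comp_of_def)
  ultimately have "?R\<^sup>*\<^sup>* v v0"
    by (metis symp_rtranclp sympD)
  with \<open>?R\<^sup>*\<^sup>* v0 v\<close> show ?thesis
    unfolding comp_of_def by (auto intro: rtranclp_trans)
qed

lemma comp_of_adj_closed:
  "a \<in> comp_of I W v \<Longrightarrow> b \<in> W \<Longrightarrow> adj I a b \<Longrightarrow> b \<in> comp_of I W v"
  by (auto simp: comp_of_def intro: rtranclp.rtrancl_into_rtrancl)

lemma components_subset: "C \<in> components I W \<Longrightarrow> C \<subseteq> W"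
  by (auto simp: components_def comp_of_def)

lemma nbhd_component_subset:
  assumes "C \<in> components I (Vs I - Y)"
  shows "nbhd I C \<subseteq> Y"
proof
  fix v assume "v \<in> nbhd I C"
  then obtain u where u: "u \<in> C" "adj I u v" and v: "v \<in> Vs I" "v \<notin> C"
    by (auto simp: nbhd_def)
  obtain v0 where C: "C = comp_of I (Vs I - Y) v0"
    using assms by (auto simp: components_def)
  show "v \<in> Y"
  proof (rule ccontr)
    assume "v \<notin> Y"
    then have "v \<in> C"
      using comp_of_adj_closed[of u I "Vs I - Y" v0 v] u v C by simp
    with v show False by simp
  qed
qed

lemma mem_nbhd_component_iff:
  assumes "C \<in> components I (Vs I - Y)" "u \<in> C" "adj I u v" "v \<in> Vs I"
  shows "v \<in> nbhd I C \<longleftrightarrow> v \<in> Y"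
  using assms nbhd_component_subset[OF assms(1)] components_subset[OF assms(1)]
  by (auto simp: nbhd_def)

lemma null_union_subset: "null_union I Y \<subseteq> Vs I"
  using components_subset by (fastforce simp: null_union_def)

lemma proj_eq_Coll_iff:
  assumes "C \<in> components I (Vs I - Y)" "v \<in> Vs I"
  shows "proj I Y v = Coll C \<longleftrightarrow> v \<in> C"
proof
  assume "proj I Y v = Coll C"
  then have "v \<notin> Y" "C = comp_of I (Vs I - Y) v"
    by (simp_all add: proj_def split: if_splits)
  then show "v \<in> C"
    using mem_comp_of_self[of v "Vs I - Y" I] assms(2) by simp
next
  assume v: "v \<in> C"
  obtain v0 where C: "C = comp_of I (Vs I - Y) v0"
    using assms(1) by (auto simp: components_def)
  then have "v \<notin> Y"
    using v comp_of_subset[of I "Vs I - Y" v0] by auto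
  then show "proj I Y v = Coll C"
    using comp_of_eq[of v I "Vs I - Y" v0] v C by (simp add: proj_def)
qed

section \<open>The compressed instance\<close>

lemma compress_simps [simp]:
  "Vs (compress I Y) = Keep ` Y \<union> Coll ` coll_comps I Y \<union>
     (if null_union I Y \<noteq> {} then {Ominus} else {})"
  "Es (compress I Y) = {e \<in> Es I. src I e \<in> Y \<or> tgt I e \<in> Y}"
  "src (compress I Y) e = proj I Y (src I e)"
  "tgt (compress I Y) e = proj I Y (tgt I e)"
  "Dm (compress I Y) (Keep y) = KS ` Dm I y"
  "Dm (compress I Y) (Coll C) = IS ` {x. \<forall>e. e \<notin> Ebetween I C (nbhd I C) \<longrightarrow> x e = {}}"
  "Dm (compress I Y) Ominus = {UnitS}"
  "costf (compress I Y) (Keep y) (KS b) = costf I y b"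
  "costf (compress I Y) (Coll C) (IS x) = Inf {val_cost I C \<phi> | \<phi>. valuation I C \<phi> \<and>
     locally_correct I C \<phi> \<and> interaction I C (nbhd I C) \<phi> = x}"
  "costf (compress I Y) Ominus UnitS = Inf {val_cost I (null_union I Y) \<phi> | \<phi>.
     valuation I (null_union I Y) \<phi> \<and> locally_correct I (null_union I Y) \<phi>}"
  "suppl (compress I Y) (Keep y) (KS b) = suppl I y b"
  "suppl (compress I Y) (Coll C) (IS x) = {e. Supply \<in> x e}"
  "suppl (compress I Y) Ominus UnitS = {}"
  "demnd (compress I Y) (Keep y) (KS b) = demnd I y b"
  "demnd (compress I Y) (Coll C) (IS x) = {e. Demand \<in> x e}"
  "demnd (compress I Y) Ominus UnitS = {}"
  by (simp_all add: compress_def)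

lemma inc_compress_Keep: "y \<in> Y \<Longrightarrow> inc (compress I Y) (Keep y) = inc I y"
  by (auto simp: inc_def proj_def)

lemma inc_compress_Ominus: "inc (compress I Y) Ominus = {}"
  by (auto simp: inc_def proj_def)

lemma inc_compress_Coll:
  assumes "is_instance I" "C \<in> components I (Vs I - Y)"
  shows "inc (compress I Y) (Coll C) = Ebetween I C (nbhd I C)"
proof -
  have ends: "src I e \<in> Vs I" "tgt I e \<in> Vs I" if "e \<in> Es I" for e
    using assms(1) that by (auto simp: is_instance_def)
  have "C \<subseteq> Vs I - Y"
    using components_subset[OF assms(2)] .
  then have "inc (compress I Y) (Coll C) =
      {e \<in> Es I. (src I e \<in> C \<and> tgt I e \<in> Y) \<or> (src I e \<in> Y \<and> tgt I e \<in> C)}"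
    using ends proj_eq_Coll_iff[OF assms(2)] by (auto simp: inc_def)
  also have "\<dots> = Ebetween I C (nbhd I C)"
    unfolding Ebetween_def
  proof (intro Collect_cong conj_cong refl)
    fix e assume e: "e \<in> Es I"
    then have "adj I (src I e) (tgt I e)" "adj I (tgt I e) (src I e)"
      by (auto simp: adj_def)
    then have "src I e \<in> C \<Longrightarrow> tgt I e \<in> nbhd I C \<longleftrightarrow> tgt I e \<in> Y"
      and "tgt I e \<in> C \<Longrightarrow> src I e \<in> nbhd I C \<longleftrightarrow> src I e \<in> Y"
      using mem_nbhd_component_iff[OF assms(2)] ends[OF e] by blast+
    then show "(src I e \<in> C \<and> tgt I e \<in> Y \<or> src I e \<in> Y \<and> tgt I e \<in> C) \<longleftrightarrow>
        (src I e \<in> C \<and> tgt I e \<in> nbhd I C \<or> src I e \<in> nbhd I C \<and> tgt I e \<in> C)"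
      by blast
  qed
  finally show ?thesis .
qed

section \<open>Valuations\<close>

lemma full_supply_valuation:
  assumes "is_instance I" "A \<subseteq> Vs I"
  obtains \<phi> where "valuation I A \<phi>" "locally_correct I A \<phi>" "val_cost I A \<phi> < \<infinity>"
    "\<forall>u\<in>A. suppl I u (\<phi> u) = inc I u"
proof -
  have "\<forall>u\<in>A. \<exists>x. x \<in> Dm I u \<and> suppl I u x = inc I u \<and> costf I u x < \<infinity>"
    using assms by (auto simp: is_instance_def)
  then obtain \<phi> where \<phi>: "\<forall>u\<in>A. \<phi> u \<in> Dm I u \<and> suppl I u (\<phi> u) = inc I u \<and> costf I u (\<phi> u) < \<infinity>"
    by metis
  have "locally_correct I A \<phi>"
    using \<phi> by (auto simp: locally_correct_def valid_edge_def inc_def)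
  moreover have "val_cost I A \<phi> < \<infinity>"
    using \<phi> assms finite_subset[OF assms(2)] by (simp add: val_cost_def is_instance_def)
  ultimately show thesis
    using \<phi> that unfolding valuation_def by blast
qed

lemma finite_val_costs:
  assumes "is_instance I" "A \<subseteq> Vs I"
  shows "finite {val_cost I A \<phi> | \<phi>. valuation I A \<phi> \<and> P \<phi>}"
proof -
  have "finite A"
    using assms finite_subset by (auto simp: is_instance_def)
  then have "finite (val_cost I A ` PiE A (Dm I))"
    using assms by (intro finite_imageI finite_PiE) (auto simp: is_instance_def)
  moreover have "val_cost I A \<phi> \<in> val_cost I A ` PiE A (Dm I)" if "valuation I A \<phi>" for \<phi>
  proof (rule image_eqI)
    show "val_cost I A \<phi> = val_cost I A (restrict \<phi> A)"
      by (simp add: val_cost_def)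
  qed (use that in \<open>simp add: valuation_def\<close>)
  then have "{val_cost I A \<phi> | \<phi>. valuation I A \<phi> \<and> P \<phi>} \<subseteq> val_cost I A ` PiE A (Dm I)"
    by blast
  ultimately show ?thesis
    using finite_subset by blast
qed

lemma Inf_val_cost_attained:
  assumes "is_instance I" "A \<subseteq> Vs I"
    and "Inf {val_cost I A \<phi> | \<phi>. valuation I A \<phi> \<and> P \<phi>} < \<infinity>"
  obtains \<phi> where "valuation I A \<phi>" "P \<phi>"
    "val_cost I A \<phi> = Inf {val_cost I A \<phi> | \<phi>. valuation I A \<phi> \<and> P \<phi>}"
proof -
  let ?V = "{val_cost I A \<phi> | \<phi>. valuation I A \<phi> \<and> P \<phi>}"
  have nonempty: "?V \<noteq> {}"
    using assms(3) by (metis Inf_empty infinity_ennreal_def less_irrefl)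
  have "finite ?V"
    by (rule finite_val_costs[OF assms(1,2)])
  then have "Inf ?V \<in> ?V"
    unfolding cInf_eq_Min[OF \<open>finite ?V\<close> nonempty] using nonempty by (rule Min_in)
  then show thesis
    using that by auto
qed

lemma state_monotonous_combine:
  assumes "\<forall>u\<in>A. state_monotonous I u"
    and "valuation I A \<phi>1" "locally_correct I A \<phi>1" "valuation I A \<phi>2"
  obtains \<phi> where "valuation I A \<phi>" "locally_correct I A \<phi>"
    "val_cost I A \<phi> \<le> val_cost I A \<phi>1 + val_cost I A \<phi>2"
    "\<forall>u\<in>A. suppl I u (\<phi> u) = suppl I u (\<phi>1 u) \<union> suppl I u (\<phi>2 u)"
    "\<forall>u\<in>A. demnd I u (\<phi> u) \<subseteq> demnd I u (\<phi>1 u)"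
proof -
  have "\<forall>u\<in>A. \<exists>x \<in> Dm I u. costf I u x \<le> costf I u (\<phi>1 u) + costf I u (\<phi>2 u) \<and>
      suppl I u x = suppl I u (\<phi>1 u) \<union> suppl I u (\<phi>2 u) \<and> demnd I u x \<subseteq> demnd I u (\<phi>1 u)"
    using assms(1,2,4) by (auto simp: state_monotonous_def valuation_def)
  then obtain \<phi> where \<phi>: "\<forall>u\<in>A. \<phi> u \<in> Dm I u \<and> costf I u (\<phi> u) \<le> costf I u (\<phi>1 u) + costf I u (\<phi>2 u) \<and>
      suppl I u (\<phi> u) = suppl I u (\<phi>1 u) \<union> suppl I u (\<phi>2 u) \<and> demnd I u (\<phi> u) \<subseteq> demnd I u (\<phi>1 u)"
    by metis
  \<comment> \<open>supplies only grow and demands only shrink relative to \<open>\<phi>1\<close>, so validity of edges is kept\<close>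
  have "locally_correct I A \<phi>"
    using assms(3) \<phi> by (fastforce simp: locally_correct_def valid_edge_def)
  moreover have "val_cost I A \<phi> \<le> val_cost I A \<phi>1 + val_cost I A \<phi>2"
    unfolding val_cost_def sum.distrib[symmetric] using \<phi> by (intro sum_mono) blast
  ultimately show thesis
    using \<phi> that unfolding valuation_def by blast
qed

section \<open>Collapsed components\<close>

lemma finite_card_supported_funs:
  assumes "finite E" "finite B"
  shows "finite {x. (\<forall>e\<in>E. x e \<in> B) \<and> (\<forall>e. e \<notin> E \<longrightarrow> x e = c)}"
    and "card {x. (\<forall>e\<in>E. x e \<in> B) \<and> (\<forall>e. e \<notin> E \<longrightarrow> x e = c)} \<le> card B ^ card E"
proof -
  let ?F = "{x. (\<forall>e\<in>E. x e \<in> B) \<and> (\<forall>e. e \<notin> E \<longrightarrow> x e = c)}"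
  have F: "?F = (\<lambda>g e. if e \<in> E then g e else c) ` PiE E (\<lambda>_. B)"
  proof (intro equalityI subsetI)
    fix x assume "x \<in> ?F"
    then show "x \<in> (\<lambda>g e. if e \<in> E then g e else c) ` PiE E (\<lambda>_. B)"
      by (intro image_eqI[where x = "restrict x E"]) (auto simp: fun_eq_iff)
  qed auto
  show "finite ?F"
    unfolding F using assms by (intro finite_imageI finite_PiE)
  have "card ?F \<le> card (PiE E (\<lambda>_. B))"
    unfolding F by (rule card_image_le) (use assms in \<open>intro finite_PiE\<close>)
  also have "\<dots> = card B ^ card E"
    using assms(1) by (simp add: card_PiE)
  finally show "card ?F \<le> card B ^ card E" .
qed

lemma UNIV_sd: "(UNIV :: sd set) = {Supply, Demand}"
  using sd.exhaust by auto

lemma finite_UNIV_sd_set: "finite (UNIV :: sd set set)"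
  by (simp add: UNIV_sd Pow_UNIV[symmetric] del: Pow_UNIV)

lemma card_UNIV_sd_set: "card (UNIV :: sd set set) = 4"
  by (simp add: UNIV_sd card_Pow Pow_UNIV[symmetric] del: Pow_UNIV)

lemma card_Ebetween_le:
  assumes "decent s d I" "S \<subseteq> Vs I"
  shows "card (Ebetween I R S) \<le> s * card S"
proof -
  have fin: "finite (Es I)" "finite S"
    using assms finite_subset by (auto simp: decent_def is_instance_def)
  have "card (Ebetween I R S) \<le> card (\<Union>v\<in>S. inc I v)"
    using fin by (intro card_mono) (auto simp: Ebetween_def inc_def)
  also have "\<dots> \<le> (\<Sum>v\<in>S. card (inc I v))"
    by (rule card_UN_le[OF fin(2)])
  also have "\<dots> \<le> (\<Sum>v\<in>S. s)"
    using assms by (intro sum_mono) (auto simp: decent_def meager_def)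
  finally show ?thesis
    by (simp add: mult.commute)
qed

lemma interaction_eq_empty: "e \<notin> Ebetween I C S \<Longrightarrow> interaction I C S \<phi> e = {}"
  by (simp add: interaction_def)

lemma Supply_in_interaction:
  assumes "C \<inter> S = {}" "e \<in> Ebetween I C S" "\<forall>u\<in>C. suppl I u (\<phi> u) = inc I u"
  shows "Supply \<in> interaction I C S \<phi> e"
  using assms by (auto simp: interaction_def Ebetween_def Let_def inc_def)

lemma interaction_combine:
  assumes "C \<inter> S = {}"
    and "\<forall>u\<in>C. suppl I u (\<phi> u) = suppl I u (\<phi>1 u) \<union> suppl I u (\<phi>2 u)"
    and "\<forall>u\<in>C. demnd I u (\<phi> u) \<subseteq> demnd I u (\<phi>1 u)"
  shows "{e. Supply \<in> interaction I C S \<phi> e} =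
           {e. Supply \<in> interaction I C S \<phi>1 e} \<union> {e. Supply \<in> interaction I C S \<phi>2 e}"
    and "{e. Demand \<in> interaction I C S \<phi> e} \<subseteq> {e. Demand \<in> interaction I C S \<phi>1 e}"
  using assms by (auto simp: interaction_def Ebetween_def Let_def)

lemma costf_compress_Coll_le:
  assumes "valuation I C \<phi>" "locally_correct I C \<phi>"
  shows "costf (compress I Y) (Coll C) (IS (interaction I C (nbhd I C) \<phi>)) \<le> val_cost I C \<phi>"
  using assms by (auto intro: Inf_lower)

lemma costf_compress_Coll_attained:
  assumes "is_instance I" "C \<subseteq> Vs I" "costf (compress I Y) (Coll C) (IS x) < \<infinity>"
  obtains \<phi> where "valuation I C \<phi>" "locally_correct I C \<phi>" "interaction I C (nbhd I C) \<phi> = x"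
    "val_cost I C \<phi> = costf (compress I Y) (Coll C) (IS x)"
  using Inf_val_cost_attained[of I C "\<lambda>\<phi>. locally_correct I C \<phi> \<and> interaction I C (nbhd I C) \<phi> = x"]
    assms by auto

lemma costf_compress_Coll_merge:
  assumes "is_instance I" "C \<subseteq> Vs I" "\<forall>u\<in>C. state_monotonous I u"
    and "costf (compress I Y) (Coll C) (IS x1) < \<infinity>" "costf (compress I Y) (Coll C) (IS x2) < \<infinity>"
  obtains x where "\<forall>e. e \<notin> Ebetween I C (nbhd I C) \<longrightarrow> x e = {}"
    "costf (compress I Y) (Coll C) (IS x) \<le>
       costf (compress I Y) (Coll C) (IS x1) + costf (compress I Y) (Coll C) (IS x2)"
    "{e. Supply \<in> x e} = {e. Supply \<in> x1 e} \<union> {e. Supply \<in> x2 e}"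
    "{e. Demand \<in> x e} \<subseteq> {e. Demand \<in> x1 e}"
proof -
  let ?c = "\<lambda>x. costf (compress I Y) (Coll C) (IS x)"
  obtain \<phi>1 \<phi>2 where
    \<phi>1: "valuation I C \<phi>1" "locally_correct I C \<phi>1" "interaction I C (nbhd I C) \<phi>1 = x1"
      "val_cost I C \<phi>1 = ?c x1" and
    \<phi>2: "valuation I C \<phi>2" "locally_correct I C \<phi>2" "interaction I C (nbhd I C) \<phi>2 = x2"
      "val_cost I C \<phi>2 = ?c x2"
    using costf_compress_Coll_attained[OF assms(1,2)] assms(4,5) by metis
  obtain \<phi> where \<phi>: "valuation I C \<phi>" "locally_correct I C \<phi>"
    "val_cost I C \<phi> \<le> val_cost I C \<phi>1 + val_cost I C \<phi>2"
    "\<forall>u\<in>C. suppl I u (\<phi> u) = suppl I u (\<phi>1 u) \<union> suppl I u (\<phi>2 u)"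
    "\<forall>u\<in>C. demnd I u (\<phi> u) \<subseteq> demnd I u (\<phi>1 u)"
    using state_monotonous_combine[OF assms(3) \<phi>1(1,2) \<phi>2(1)] by blast
  have "C \<inter> nbhd I C = {}"
    by (auto simp: nbhd_def)
  note combined = interaction_combine[OF this \<phi>(4,5), unfolded \<phi>1(3) \<phi>2(3)]
  let ?x = "interaction I C (nbhd I C) \<phi>"
  have "?c ?x \<le> val_cost I C \<phi>"
    by (rule costf_compress_Coll_le[OF \<phi>(1,2)])
  also have "\<dots> \<le> ?c x1 + ?c x2"
    using \<phi>(3) by (simp only: \<phi>1(4) \<phi>2(4))
  finally show thesis
    using that[of ?x] combined by (simp add: interaction_eq_empty)
qed

lemma state_monotonous_compress_Coll:
  assumes "is_instance I" "C \<subseteq> Vs I" "\<forall>u\<in>C. state_monotonous I u"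
  shows "state_monotonous (compress I Y) (Coll C)"
proof -
  let ?c = "\<lambda>x. costf (compress I Y) (Coll C) (IS x)"
  let ?F = "{x. \<forall>e. e \<notin> Ebetween I C (nbhd I C) \<longrightarrow> x e = {}}"
  have "\<exists>x\<in>?F. ?c x \<le> ?c x1 + ?c x2 \<and>
      {e. Supply \<in> x e} = {e. Supply \<in> x1 e} \<union> {e. Supply \<in> x2 e} \<and>
      {e. Demand \<in> x e} \<subseteq> {e. Demand \<in> x1 e}"
    if x12: "x1 \<in> ?F" "x2 \<in> ?F" for x1 x2
  proof (cases "?c x1 < \<infinity> \<and> ?c x2 < \<infinity>")
    case True
    then have "?c x1 < \<infinity>" "?c x2 < \<infinity>"
      by blast+
    then obtain x where "x \<in> ?F" "?c x \<le> ?c x1 + ?c x2"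
      "{e. Supply \<in> x e} = {e. Supply \<in> x1 e} \<union> {e. Supply \<in> x2 e}"
      "{e. Demand \<in> x e} \<subseteq> {e. Demand \<in> x1 e}"
      by (rule costf_compress_Coll_merge[OF assms]) simp
    then show ?thesis
      by blast
  next
    case False
    \<comment> \<open>one of the two states is unattainable, so any state with the right supply and demand will do\<close>
    then have "?c x1 + ?c x2 = \<infinity>"
      by (auto simp del: compress_simps simp: less_top[symmetric])
    then show ?thesis
      using x12 by (intro bexI[of _ "\<lambda>e. x1 e \<union> (x2 e - {Demand})"]) (auto simp del: compress_simps)
  qed
  then show ?thesis
    by (fastforce simp: state_monotonous_def)
qed

section \<open>Decency, vertex by vertex\<close>

definition decent_vertex :: "nat \<Rightarrow> nat \<Rightarrow> ('v, 'e, 's) inst \<Rightarrow> 'v \<Rightarrow> bool" where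
  "decent_vertex s d I u \<longleftrightarrow> finite (Dm I u) \<and>
     (\<forall>x \<in> Dm I u. suppl I u x \<subseteq> inc I u \<and> demnd I u x \<subseteq> inc I u) \<and>
     (\<exists>x \<in> Dm I u. suppl I u x = inc I u \<and> costf I u x < \<infinity>) \<and>
     meager s d I u \<and> state_monotonous I u"

lemma decent_iff_decent_vertex:
  "decent s d I \<longleftrightarrow> finite (Vs I) \<and> finite (Es I) \<and>
     (\<forall>e \<in> Es I. src I e \<in> Vs I \<and> tgt I e \<in> Vs I \<and> src I e \<noteq> tgt I e) \<and>
     (\<forall>u \<in> Vs I. decent_vertex s d I u)"
  by (simp add: decent_def is_instance_def decent_vertex_def ball_conj_distrib conj_ac)

lemma decent_vertex_mono:
  "decent_vertex s d I u \<Longrightarrow> s \<le> s' \<Longrightarrow> d \<le> d' \<Longrightarrow> decent_vertex s' d' I u"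
  by (auto simp: decent_vertex_def meager_def)

lemma decent_vertex_compress_Keep:
  assumes "decent s d I" "Y \<subseteq> Vs I" "y \<in> Y"
  shows "decent_vertex s d (compress I Y) (Keep y)"
proof -
  have "decent_vertex s d I y"
    using assms by (auto simp: decent_iff_decent_vertex)
  moreover have "card (Dm (compress I Y) (Keep y)) = card (Dm I y)"
    by (simp add: card_image inj_on_def)
  ultimately show ?thesis
    using assms(3)
    by (auto simp: decent_vertex_def meager_def state_monotonous_def inc_compress_Keep)
qed

lemma decent_vertex_compress_Coll:
  fixes I :: "('v, 'e, 's) inst"
  assumes "decent s d I" "C \<in> components I (Vs I - Y)"
  shows "decent_vertex (s * card (nbhd I C)) (4 ^ (s * card (nbhd I C))) (compress I Y) (Coll C)"
proof -
  let ?E = "Ebetween I C (nbhd I C)"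
  let ?F = "{x :: 'e \<Rightarrow> sd set. \<forall>e. e \<notin> ?E \<longrightarrow> x e = {}}"
  let ?J = "compress I Y"
  have inst: "is_instance I" and CV: "C \<subseteq> Vs I"
    using assms components_subset by (auto simp: decent_def)
  have inc: "inc ?J (Coll C) = ?E"
    by (rule inc_compress_Coll[OF inst assms(2)])
  have card_E: "card ?E \<le> s * card (nbhd I C)"
    using card_Ebetween_le[OF assms(1)] by (auto simp: nbhd_def)
  have "finite ?E"
    using inst by (auto simp: is_instance_def Ebetween_def)
  have "?F = {x. (\<forall>e\<in>?E. x e \<in> UNIV) \<and> (\<forall>e. e \<notin> ?E \<longrightarrow> x e = {})}"
    by simp
  then have "finite ?F" and "card ?F \<le> 4 ^ card ?E"
    using finite_card_supported_funs[OF \<open>finite ?E\<close> finite_UNIV_sd_set, of "{}"]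
    by (simp_all add: card_UNIV_sd_set)
  note \<open>card ?F \<le> 4 ^ card ?E\<close>
  also have "(4::nat) ^ card ?E \<le> 4 ^ (s * card (nbhd I C))"
    using card_E by (rule power_increasing) simp
  also have "card ?F = card (Dm ?J (Coll C))"
    by (simp add: card_image inj_on_def)
  finally have card_Dm: "card (Dm ?J (Coll C)) \<le> 4 ^ (s * card (nbhd I C))" .
  obtain \<phi> where \<phi>: "valuation I C \<phi>" "locally_correct I C \<phi>" "val_cost I C \<phi> < \<infinity>"
    "\<forall>u\<in>C. suppl I u (\<phi> u) = inc I u"
    using full_supply_valuation[OF inst CV] by blast
  let ?x = "interaction I C (nbhd I C) \<phi>"
  have "C \<inter> nbhd I C = {}"
    by (auto simp: nbhd_def)
  then have "suppl ?J (Coll C) (IS ?x) = ?E"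
    using Supply_in_interaction[OF _ _ \<phi>(4)] interaction_eq_empty by fastforce
  moreover have "costf ?J (Coll C) (IS ?x) < \<infinity>"
    using costf_compress_Coll_le[OF \<phi>(1,2)] \<phi>(3) by (rule le_less_trans)
  moreover have "IS ?x \<in> Dm ?J (Coll C)"
    by (simp add: interaction_eq_empty)
  ultimately have full_supply: "\<exists>x \<in> Dm ?J (Coll C). suppl ?J (Coll C) x = ?E \<and> costf ?J (Coll C) x < \<infinity>"
    by blast
  moreover have "\<forall>x \<in> Dm ?J (Coll C). suppl ?J (Coll C) x \<subseteq> ?E \<and> demnd ?J (Coll C) x \<subseteq> ?E"
    by auto
  moreover have "finite (Dm ?J (Coll C))"
    using \<open>finite ?F\<close> by simp
  moreover have "state_monotonous ?J (Coll C)"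
    using state_monotonous_compress_Coll[OF inst CV] assms(1) CV by (auto simp: decent_def)
  ultimately show ?thesis
    unfolding decent_vertex_def meager_def inc using card_E card_Dm by blast
qed

lemma decent_vertex_compress_Ominus:
  assumes "is_instance I"
  shows "decent_vertex 0 1 (compress I Y) Ominus"
proof -
  obtain \<phi> where \<phi>: "valuation I (null_union I Y) \<phi>" "locally_correct I (null_union I Y) \<phi>"
    "val_cost I (null_union I Y) \<phi> < \<infinity>"
    using full_supply_valuation[OF assms null_union_subset] by blast
  then have "costf (compress I Y) Ominus UnitS \<le> val_cost I (null_union I Y) \<phi>"
    by (auto intro: Inf_lower)
  with \<phi>(3) have "costf (compress I Y) Ominus UnitS < \<infinity>"
    by (rule le_less_trans[rotated])
  then show ?thesis
    by (simp add: decent_vertex_def meager_def state_monotonous_def inc_compress_Ominus)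
qed

lemma proj_mem_Vs_compress:
  assumes "Y \<subseteq> Vs I" "v \<in> Vs I" "v \<in> Y \<or> (\<exists>w\<in>Y. adj I v w)"
  shows "proj I Y v \<in> Vs (compress I Y)"
proof (cases "v \<in> Y")
  case True
  then show ?thesis
    by (simp add: proj_def)
next
  case False
  let ?C = "comp_of I (Vs I - Y) v"
  obtain w where "w \<in> Y" "adj I v w"
    using assms(3) False by blast
  have "?C \<in> components I (Vs I - Y)"
    using assms(2) False by (simp add: components_def)
  moreover have "w \<in> nbhd I ?C"
    using mem_comp_of_self[of v "Vs I - Y" I] comp_of_subset[of I "Vs I - Y" v] assms(1,2)
      False \<open>w \<in> Y\<close> \<open>adj I v w\<close>
    by (auto simp: nbhd_def)
  ultimately have "?C \<in> coll_comps I Y"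
    by (auto simp: coll_comps_def)
  then show ?thesis
    using False by (simp add: proj_def)
qed

lemma compress_edge_endpoints:
  assumes "is_instance I" "Y \<subseteq> Vs I" "e \<in> Es (compress I Y)"
  shows "src (compress I Y) e \<in> Vs (compress I Y) \<and> tgt (compress I Y) e \<in> Vs (compress I Y) \<and>
    src (compress I Y) e \<noteq> tgt (compress I Y) e"
proof -
  have e: "e \<in> Es I" "src I e \<in> Y \<or> tgt I e \<in> Y"
    using assms(3) by auto
  then have ends: "src I e \<in> Vs I" "tgt I e \<in> Vs I" "src I e \<noteq> tgt I e"
    using assms(1) by (auto simp: is_instance_def)
  have "adj I (src I e) (tgt I e)" "adj I (tgt I e) (src I e)"
    using e(1) by (auto simp: adj_def)
  then have "proj I Y (src I e) \<in> Vs (compress I Y)" "proj I Y (tgt I e) \<in> Vs (compress I Y)"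
    using proj_mem_Vs_compress[OF assms(2)] ends e(2) by blast+
  moreover have "proj I Y (src I e) \<noteq> proj I Y (tgt I e)"
    using e(2) ends(3) by (auto simp: proj_def)
  ultimately show ?thesis
    by simp
qed

lemma finite_Vs_compress:
  assumes "finite (Vs I)" "Y \<subseteq> Vs I"
  shows "finite (Vs (compress I Y))"
proof -
  have "finite (coll_comps I Y)"
    using assms(1) by (simp add: coll_comps_def components_def)
  then have "finite (Coll ` coll_comps I Y)"
    by (rule finite_imageI)
  then show ?thesis
    using finite_subset[OF assms(2,1)] by simp
qed

lemma decent_vertex_compress:
  assumes "decent s d I" "Y \<subseteq> Vs I" "\<forall>C \<in> components I (Vs I - Y). card (nbhd I C) \<le> t"
    and "t \<ge> 1" "u \<in> Vs (compress I Y)"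
  shows "decent_vertex (s * t) (max d (4 ^ (s * t))) (compress I Y) u"
proof -
  consider (Keep) y where "u = Keep y" "y \<in> Y"
    | (Coll) C where "u = Coll C" "C \<in> components I (Vs I - Y)"
    | (Ominus) "u = Ominus"
    using assms(5) by (auto simp: coll_comps_def split: if_splits)
  then show ?thesis
  proof cases
    case Keep
    have "s \<le> s * t"
      using assms(4) by simp
    with decent_vertex_compress_Keep[OF assms(1,2) Keep(2)] show ?thesis
      unfolding Keep(1) by (rule decent_vertex_mono) simp
  next
    case Coll
    then have st: "s * card (nbhd I C) \<le> s * t"
      using assms(3) by simp
    then have "(4::nat) ^ (s * card (nbhd I C)) \<le> 4 ^ (s * t)"
      by (rule power_increasing) simp
    then have "4 ^ (s * card (nbhd I C)) \<le> max d (4 ^ (s * t))"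
      by (simp add: le_max_iff_disj)
    with decent_vertex_compress_Coll[OF assms(1) Coll(2)] st show ?thesis
      unfolding Coll(1) by (rule decent_vertex_mono)
  next
    case Ominus
    have "decent_vertex 0 1 (compress I Y) Ominus"
      using assms(1) by (intro decent_vertex_compress_Ominus) (simp add: decent_def)
    then show ?thesis
      unfolding Ominus by (rule decent_vertex_mono) (simp_all add: le_max_iff_disj)
  qed
qed

theorem lemma4p8:
  fixes I :: "('v, 'e, 's) inst" and Y :: "'v set" and s d t :: nat
  assumes "s \<ge> 1" and "d \<ge> 1" and "t \<ge> 1"
    and "decent s d I"
    and "Y \<subseteq> Vs I"
    and "\<forall>C \<in> components I (Vs I - Y). card (nbhd I C) \<le> t"
  shows "decent (s * t) (d + 4 ^ (s * t)) (compress I Y)"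
proof -
  have inst: "is_instance I" and fin: "finite (Vs I)" "finite (Es I)"
    using assms(4) by (auto simp: decent_def is_instance_def)
  have "decent_vertex (s * t) (d + 4 ^ (s * t)) (compress I Y) u" if "u \<in> Vs (compress I Y)" for u
    using decent_vertex_compress[OF assms(4,5,6,3) that] by (rule decent_vertex_mono) simp_all
  moreover have "finite (Vs (compress I Y))" "finite (Es (compress I Y))"
    using finite_Vs_compress[OF fin(1) assms(5)] fin(2) by simp_all
  ultimately show ?thesis
    using compress_edge_endpoints[OF inst assms(5)] unfolding decent_iff_decent_vertex by blast
qed

end
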